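(* Let $X$ be a distance-regular graph of diameter $d\geq 3$ on $n$ vertices with degree $k$, and suppose $k>\gamma n>2$ for some $\gamma>0$. If $X$ is not bipartite, then $\mathrm{motion}(X)\geq \frac{\gamma}{3}n$.
   Context: A connected graph $X$ of diameter $d$ is distance-regular if there are integers $a_i,b_i,c_i$ ($0\le i\le d$) such that for all vertices $v,w$ with $\mathrm{dist}(v,w)=i$, $w$ has exactly $c_i$ neighbours at distance $i-1$, $a_i$ at distance $i$, $b_i$ at distance $i+1$ from $v$; $X$ is $k$-regular with $k=b_0$. The motion $\mathrm{motion}(X)$ is the minimum, over non-identity automorphisms of $X$, of the number of vertices not fixed by the automorphism. *)

theory Defs
  imports Main "HOL-Library.Extended_Nat"
begin

definition simple_graph :: "'a set \<Rightarrow> ('a \<Rightarrow> 'a \<Rightarrow> bool) \<Rightarrow> bool" where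
  "simple_graph V E \<longleftrightarrow> finite V \<and> (\<forall>u v. E u v \<longrightarrow> u \<in> V \<and> v \<in> V)
     \<and> (\<forall>u v. E u v \<longrightarrow> E v u) \<and> (\<forall>v. \<not> E v v)"

definition is_walk :: "'a set \<Rightarrow> ('a \<Rightarrow> 'a \<Rightarrow> bool) \<Rightarrow> 'a list \<Rightarrow> 'a \<Rightarrow> 'a \<Rightarrow> bool" where
  "is_walk V E xs v w \<longleftrightarrow> xs \<noteq> [] \<and> hd xs = v \<and> last xs = w \<and> set xs \<subseteq> V
     \<and> (\<forall>j. Suc j < length xs \<longrightarrow> E (xs ! j) (xs ! Suc j))"

definition connected_graph :: "'a set \<Rightarrow> ('a \<Rightarrow> 'a \<Rightarrow> bool) \<Rightarrow> bool" where
  "connected_graph V E \<longleftrightarrow> V \<noteq> {} \<and> (\<forall>v\<in>V. \<forall>w\<in>V. \<exists>xs. is_walk V E xs v w)"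

text \<open>Graph distance: the least length of a walk (meaningful in a connected graph).\<close>

definition gdist :: "'a set \<Rightarrow> ('a \<Rightarrow> 'a \<Rightarrow> bool) \<Rightarrow> 'a \<Rightarrow> 'a \<Rightarrow> nat" where
  "gdist V E v w = (LEAST i. \<exists>xs. is_walk V E xs v w \<and> length xs = Suc i)"

definition diameter :: "'a set \<Rightarrow> ('a \<Rightarrow> 'a \<Rightarrow> bool) \<Rightarrow> nat" where
  "diameter V E = Max {gdist V E v w | v w. v \<in> V \<and> w \<in> V}"

definition degree :: "'a set \<Rightarrow> ('a \<Rightarrow> 'a \<Rightarrow> bool) \<Rightarrow> 'a \<Rightarrow> nat" where
  "degree V E v = card {u \<in> V. E v u}"

definition distance_regular :: "'a set \<Rightarrow> ('a \<Rightarrow> 'a \<Rightarrow> bool) \<Rightarrow> bool" where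
  "distance_regular V E \<longleftrightarrow> simple_graph V E \<and> connected_graph V E \<and>
    (\<exists>a b c :: nat \<Rightarrow> nat. \<forall>v\<in>V. \<forall>w\<in>V.
       card {u \<in> V. E w u \<and> gdist V E v u + 1 = gdist V E v w} = c (gdist V E v w) \<and>
       card {u \<in> V. E w u \<and> gdist V E v u = gdist V E v w} = a (gdist V E v w) \<and>
       card {u \<in> V. E w u \<and> gdist V E v u = gdist V E v w + 1} = b (gdist V E v w))"

definition bipartite :: "'a set \<Rightarrow> ('a \<Rightarrow> 'a \<Rightarrow> bool) \<Rightarrow> bool" where
  "bipartite V E \<longleftrightarrow> (\<exists>A. A \<subseteq> V \<and> (\<forall>u\<in>V. \<forall>v\<in>V. E u v \<longrightarrow> (u \<in> A \<longleftrightarrow> v \<notin> A)))"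

definition automorphism :: "'a set \<Rightarrow> ('a \<Rightarrow> 'a \<Rightarrow> bool) \<Rightarrow> ('a \<Rightarrow> 'a) \<Rightarrow> bool" where
  "automorphism V E \<sigma> \<longleftrightarrow> bij_betw \<sigma> V V \<and> (\<forall>u\<in>V. \<forall>v\<in>V. E u v \<longleftrightarrow> E (\<sigma> u) (\<sigma> v))"

text \<open>Motion: minimum number of vertices moved by a non-identity automorphism
  (infinity if the automorphism group is trivial).\<close>

definition motion :: "'a set \<Rightarrow> ('a \<Rightarrow> 'a \<Rightarrow> bool) \<Rightarrow> enat" where
  "motion V E = (INF \<sigma> \<in> {\<sigma>. automorphism V E \<sigma> \<and> (\<exists>v\<in>V. \<sigma> v \<noteq> v)}.
                   enat (card {v \<in> V. \<sigma> v \<noteq> v}))"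

end

theory Submission
  imports Defs
begin

text \<open>
  An automorphism \<sigma> with \<sigma> u \<noteq> u moves every vertex in the symmetric difference of the
  neighbourhoods N(u) and N(\<sigma> u), hence at least 2(k - |N(u) \<inter> N(\<sigma> u)|) vertices.  So it
  suffices that distinct vertices have at most 5k/6 common neighbours, i.e. 6a1 \<le> 5k and
  6c2 \<le> 5k.  Counting in neighbourhoods along a geodesic of length 3 gives a1 + c2 \<le> k and
  2a1 \<le> k + c2, hence 3a1 \<le> 2k.  If a1 = 0 and 2c2 > k, two vertices at distance 2 from a
  common vertex have a common neighbour, so "equal or at distance 2" is an equivalence relation
  and one of its classes is a side of a bipartition.  If a1 > 0, counting around a triangle gives
  2c2 \<le> a1 + k, which together with a1 + c2 \<le> k excludes 6c2 > 5k.
\<close>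

locale connected_simple_graph =
  fixes V :: "'a set" and E :: "'a \<Rightarrow> 'a \<Rightarrow> bool"
  assumes simple: "simple_graph V E" and connected: "connected_graph V E"
begin

abbreviation nbhd :: "'a \<Rightarrow> 'a set" where
  "nbhd v \<equiv> {u \<in> V. E v u}"

lemma edge_sym: "E u v \<Longrightarrow> E v u"
  using simple by (simp add: simple_graph_def)

lemma edge_in_V1: "E u v \<Longrightarrow> u \<in> V"
  using simple by (simp add: simple_graph_def)

lemma edge_in_V2: "E u v \<Longrightarrow> v \<in> V"
  using simple by (simp add: simple_graph_def)

lemma no_loop: "\<not> E v v"
  using simple by (simp add: simple_graph_def)

lemma finite_V: "finite V"
  using simple by (simp add: simple_graph_def)

lemma finite_nbhd [simp]: "finite {u \<in> V. P u}"
  using finite_V by simp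

subsection \<open>Walks and distance\<close>

lemma is_walk_edge: "E v w \<Longrightarrow> is_walk V E [v, w] v w"
  using edge_in_V1 edge_in_V2 by (auto simp: is_walk_def less_Suc_eq)

lemma is_walk_path2: "E u y \<Longrightarrow> E y z \<Longrightarrow> is_walk V E [u, y, z] u z"
  using edge_in_V1 edge_in_V2 by (auto simp: is_walk_def less_Suc_eq nth_Cons split: nat.splits)

lemma is_walk_snoc:
  assumes walk: "is_walk V E xs v w" and e: "E w w'"
  shows "is_walk V E (xs @ [w']) v w'"
  unfolding is_walk_def
proof (intro conjI allI impI)
  have ne: "xs \<noteq> []" and last: "last xs = w" using walk by (auto simp: is_walk_def)
  show "hd (xs @ [w']) = v" "set (xs @ [w']) \<subseteq> V"
    using walk edge_in_V2[OF e] by (auto simp: is_walk_def)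
  fix j assume j: "Suc j < length (xs @ [w'])"
  show "E ((xs @ [w']) ! j) ((xs @ [w']) ! Suc j)"
  proof (cases "Suc j < length xs")
    case True
    then show ?thesis using walk by (simp add: is_walk_def nth_append)
  next
    case False
    then have "Suc j = length xs" using j by simp
    moreover have "xs ! j = w"
      using last ne \<open>Suc j = length xs\<close> by (metis diff_Suc_1 last_conv_nth)
    ultimately show ?thesis using e by (simp add: nth_append)
  qed
qed simp_all

lemma is_walk_rev:
  assumes walk: "is_walk V E xs v w"
  shows "is_walk V E (rev xs) w v"
  unfolding is_walk_def
proof (intro conjI allI impI)
  show "rev xs \<noteq> []" "hd (rev xs) = w" "last (rev xs) = v" "set (rev xs) \<subseteq> V"
    using walk by (auto simp: is_walk_def hd_rev last_rev)
  fix j assume j: "Suc j < length (rev xs)"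
  let ?i = "length xs - 1 - Suc j"
  have "rev xs ! j = xs ! Suc ?i" "rev xs ! Suc j = xs ! ?i"
    using j by (simp_all add: rev_nth Suc_diff_Suc)
  moreover have "E (xs ! ?i) (xs ! Suc ?i)" using walk j by (auto simp: is_walk_def)
  ultimately show "E (rev xs ! j) (rev xs ! Suc j)" using edge_sym by simp
qed

lemma is_walk_take:
  assumes walk: "is_walk V E xs v w" and i: "i < length xs"
  shows "is_walk V E (take (Suc i) xs) v (xs ! i)"
proof -
  have "take (Suc i) xs \<noteq> []" using i by (cases xs) auto
  then have "last (take (Suc i) xs) = xs ! i" using i by (simp add: last_conv_nth)
  then show ?thesis using walk i unfolding is_walk_def by (auto dest: in_set_takeD)
qed

lemma shortest_walk_exists:
  assumes "v \<in> V" "w \<in> V"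
  shows "\<exists>xs. is_walk V E xs v w \<and> length xs = Suc (gdist V E v w)"
proof -
  obtain xs where xs: "is_walk V E xs v w"
    using connected assms by (auto simp: connected_graph_def)
  then have "length xs = Suc (length xs - 1)" by (auto simp: is_walk_def)
  then have "\<exists>i xs. is_walk V E xs v w \<and> length xs = Suc i" using xs by blast
  from LeastI_ex[OF this] show ?thesis unfolding gdist_def .
qed

lemma gdist_le_length:
  assumes "is_walk V E xs v w"
  shows "gdist V E v w \<le> length xs - 1"
proof -
  have "length xs = Suc (length xs - 1)" using assms by (auto simp: is_walk_def)
  then show ?thesis unfolding gdist_def using assms by (metis (mono_tags, lifting) Least_le)
qed

lemma gdist_eq_0_imp_eq:
  assumes "v \<in> V" "w \<in> V" "gdist V E v w = 0"
  shows "v = w"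
proof -
  obtain xs where "is_walk V E xs v w" "length xs = 1"
    using shortest_walk_exists[of v w] assms by auto
  then show ?thesis by (cases xs) (auto simp: is_walk_def)
qed

lemma gdist_edge:
  assumes e: "E v w"
  shows "gdist V E v w = 1"
proof -
  have "gdist V E v w \<le> 1" using gdist_le_length[OF is_walk_edge[OF e]] by simp
  moreover have "gdist V E v w \<noteq> 0"
    using gdist_eq_0_imp_eq[OF edge_in_V1[OF e] edge_in_V2[OF e]] e no_loop by auto
  ultimately show ?thesis by simp
qed

lemma gdist_eq_1_imp_edge:
  assumes "v \<in> V" "w \<in> V" "gdist V E v w = 1"
  shows "E v w"
proof -
  obtain xs where xs: "is_walk V E xs v w" "length xs = 2"
    using shortest_walk_exists[of v w] assms by auto
  then obtain x y where "xs = [x, y]" by (cases xs; cases "tl xs") auto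
  then show ?thesis using xs by (auto simp: is_walk_def)
qed

lemma gdist_eq_1_iff: "v \<in> V \<Longrightarrow> w \<in> V \<Longrightarrow> gdist V E v w = 1 \<longleftrightarrow> E v w"
  using gdist_edge gdist_eq_1_imp_edge by blast

lemma gdist_le_2: "E u y \<Longrightarrow> E y z \<Longrightarrow> gdist V E u z \<le> 2"
  using gdist_le_length[OF is_walk_path2] by fastforce

lemma gdist_eq_2I:
  assumes xw: "E x w" and wz: "E w z" and "x \<noteq> z" "\<not> E x z"
  shows "gdist V E x z = 2"
proof -
  have V: "x \<in> V" "z \<in> V" using edge_in_V1[OF xw] edge_in_V2[OF wz] .
  have "gdist V E x z \<noteq> 0" "gdist V E x z \<noteq> 1"
    using gdist_eq_0_imp_eq[OF V] gdist_eq_1_imp_edge[OF V] assms(3,4) by blast+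
  then show ?thesis using gdist_le_2[OF xw wz] by linarith
qed

lemma gdist_step:
  assumes "v \<in> V" "E w w'"
  shows "gdist V E v w' \<le> gdist V E v w + 1"
proof -
  obtain xs where xs: "is_walk V E xs v w" "length xs = Suc (gdist V E v w)"
    using shortest_walk_exists edge_in_V1 assms by blast
  show ?thesis using gdist_le_length[OF is_walk_snoc[OF xs(1) assms(2)]] xs(2) by simp
qed

lemma gdist_sym:
  assumes "v \<in> V" "w \<in> V"
  shows "gdist V E v w = gdist V E w v"
proof -
  have le: "gdist V E x y \<le> gdist V E y x" if xy: "x \<in> V" "y \<in> V" for x y
  proof -
    obtain xs where xs: "is_walk V E xs y x" "length xs = Suc (gdist V E y x)"
      using shortest_walk_exists[OF xy(2,1)] by blast
    show ?thesis using gdist_le_length[OF is_walk_rev[OF xs(1)]] xs(2) by simp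
  qed
  show ?thesis using le[OF assms] le[OF assms(2,1)] by simp
qed

lemma gdist_Suc_predecessor:
  assumes v: "v \<in> V" and w: "w \<in> V" and d: "gdist V E v w = Suc i"
  shows "\<exists>w'. E w' w \<and> gdist V E v w' = i"
proof -
  obtain xs where xs: "is_walk V E xs v w" "length xs = Suc (Suc i)"
    using shortest_walk_exists[OF v w] d by auto
  have e: "E (xs ! i) w" using xs by (auto simp: is_walk_def last_conv_nth)
  have "gdist V E v (xs ! i) \<le> i"
    using gdist_le_length[OF is_walk_take[OF xs(1), of i]] xs(2) by simp
  moreover have "gdist V E v w \<le> gdist V E v (xs ! i) + 1" using gdist_step[OF v e] .
  ultimately show ?thesis using e d by (intro exI[of _ "xs ! i"]) auto
qed

lemma gdist_intermediate:
  "v \<in> V \<Longrightarrow> w \<in> V \<Longrightarrow> j \<le> gdist V E v w \<Longrightarrow> \<exists>w'\<in>V. gdist V E v w' = j"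
proof (induction "gdist V E v w" arbitrary: w)
  case 0
  then show ?case by auto
next
  case (Suc D)
  show ?case
  proof (cases "j = Suc D")
    case True
    then show ?thesis using Suc by metis
  next
    case False
    obtain w' where "E w' w" "gdist V E v w' = D"
      using gdist_Suc_predecessor Suc by metis
    then show ?thesis using Suc edge_in_V1 False by (metis le_Suc_eq)
  qed
qed

lemma geodesic_3_exists:
  assumes "diameter V E \<ge> 3"
  shows "\<exists>z y' y p. E z y' \<and> E y' y \<and> E y p \<and> gdist V E z y = 2 \<and> gdist V E z p = 3"
proof -
  let ?D = "{gdist V E v w | v w. v \<in> V \<and> w \<in> V}"
  have "?D = (\<lambda>(v, w). gdist V E v w) ` (V \<times> V)" by auto
  then have "finite ?D" using finite_V by simp
  moreover have "V \<noteq> {}" using connected by (simp add: connected_graph_def)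
  then have "?D \<noteq> {}" by blast
  ultimately have "diameter V E \<in> ?D" unfolding diameter_def by (rule Max_in)
  then obtain z q where zq: "z \<in> V" "q \<in> V" "gdist V E z q = diameter V E" by auto
  obtain p where p: "p \<in> V" "gdist V E z p = 3"
    using gdist_intermediate[OF zq(1,2), of 3] zq assms by auto
  obtain y where y: "E y p" "gdist V E z y = 2"
    using gdist_Suc_predecessor[OF zq(1) p(1)] p by auto
  obtain y' where y': "E y' y" "gdist V E z y' = 1"
    using gdist_Suc_predecessor[OF zq(1) edge_in_V1[OF y(1)]] y by auto
  have "E z y'" using gdist_eq_1_imp_edge[OF zq(1) edge_in_V1[OF y'(1)]] y' by simp
  then show ?thesis using p y y' by blast
qed

lemma card_nbhd_sym_diff_le_moved:
  assumes aut: "automorphism V E \<sigma>" and u: "u \<in> V"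
  shows "card (nbhd u - nbhd (\<sigma> u)) + card (nbhd (\<sigma> u) - nbhd u) \<le> card {v \<in> V. \<sigma> v \<noteq> v}"
proof -
  have moved: "\<sigma> w \<noteq> w" if "w \<in> V" "E u w \<noteq> E (\<sigma> u) w" for w
    using aut u that unfolding automorphism_def by metis
  have "card (nbhd u - nbhd (\<sigma> u)) + card (nbhd (\<sigma> u) - nbhd u)
      = card ((nbhd u - nbhd (\<sigma> u)) \<union> (nbhd (\<sigma> u) - nbhd u))"
    by (rule card_Un_disjoint[symmetric]) auto
  also have "\<dots> \<le> card {v \<in> V. \<sigma> v \<noteq> v}"
    using moved by (intro card_mono) auto
  finally show ?thesis .
qed

end

lemma enat_le_motion:
  assumes "\<And>\<sigma> v. automorphism V E \<sigma> \<Longrightarrow> v \<in> V \<Longrightarrow> \<sigma> v \<noteq> v \<Longrightarrow> M \<le> card {v \<in> V. \<sigma> v \<noteq> v}"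
  shows "enat M \<le> motion V E"
  unfolding motion_def using assms by (auto intro!: INF_greatest)

subsection \<open>Amply regular graphs\<close>

text \<open>
  The parameters \<lambda> and \<mu> of an amply regular graph are named after the intersection numbers
  a1 and c2 of a distance-regular graph.
\<close>

locale amply_regular_graph = connected_simple_graph +
  fixes k a1 c2 :: nat
  assumes card_nbhd: "v \<in> V \<Longrightarrow> card (nbhd v) = k"
    and card_common_nbhd_edge: "E u v \<Longrightarrow> card (nbhd u \<inter> nbhd v) = a1"
    and card_common_nbhd_dist2:
      "u \<in> V \<Longrightarrow> v \<in> V \<Longrightarrow> gdist V E u v = 2 \<Longrightarrow> card (nbhd u \<inter> nbhd v) = c2"
begin

lemma a1_c2_bounds:
  assumes "diameter V E \<ge> 3"
  shows "a1 + c2 \<le> k" and "2 * a1 \<le> k + c2"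
proof -
  obtain z y' y p where g: "E z y'" "E y' y" "E y p" "gdist V E z y = 2" "gdist V E z p = 3"
    using geodesic_3_exists[OF assms] by blast
  have V: "z \<in> V" "y' \<in> V" "y \<in> V" using g edge_in_V1 by blast+
  have c2_zy: "card (nbhd z \<inter> nbhd y) = c2"
    using card_common_nbhd_dist2[OF V(1,3) g(4)] .
  have "nbhd p \<inter> nbhd y \<inter> (nbhd z \<inter> nbhd y) = {}"
  proof (rule ccontr)
    assume "nbhd p \<inter> nbhd y \<inter> (nbhd z \<inter> nbhd y) \<noteq> {}"
    then obtain x where "E z x" "E x p" using edge_sym by blast
    then show False using gdist_le_2 g(5) by fastforce
  qed
  then have "card (nbhd p \<inter> nbhd y) + card (nbhd z \<inter> nbhd y)
      = card (nbhd p \<inter> nbhd y \<union> nbhd z \<inter> nbhd y)"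
    by (simp add: card_Un_disjoint)
  also have "\<dots> \<le> card (nbhd y)" by (rule card_mono) auto
  finally show "a1 + c2 \<le> k"
    using card_common_nbhd_edge[OF edge_sym[OF g(3)]] c2_zy card_nbhd[OF V(3)] by simp
  have "card (nbhd z \<inter> nbhd y') + card (nbhd y \<inter> nbhd y')
      = card (nbhd z \<inter> nbhd y' \<union> nbhd y \<inter> nbhd y') + card (nbhd z \<inter> nbhd y' \<inter> (nbhd y \<inter> nbhd y'))"
    by (rule card_Un_Int) simp_all
  also have "\<dots> \<le> card (nbhd y') + card (nbhd z \<inter> nbhd y)"
    by (intro add_mono card_mono) auto
  finally show "2 * a1 \<le> k + c2"
    using card_common_nbhd_edge[OF g(1)] card_common_nbhd_edge[OF edge_sym[OF g(2)]]
      c2_zy card_nbhd[OF V(2)] by simp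
qed

lemma c2_le_if_triangle:
  assumes e: "E p y" and a1: "a1 > 0" and k: "2 * a1 + 1 < k"
  shows "2 * c2 \<le> a1 + k"
proof -
  have "nbhd p \<inter> nbhd y \<noteq> {}" using card_common_nbhd_edge[OF e] a1 by force
  then obtain y' where y': "y' \<in> V" "E p y'" "E y y'" by blast
  have "\<not> nbhd y \<subseteq> {p} \<union> nbhd p \<inter> nbhd y \<union> nbhd y \<inter> nbhd y'"
  proof
    assume "nbhd y \<subseteq> {p} \<union> nbhd p \<inter> nbhd y \<union> nbhd y \<inter> nbhd y'"
    then have "card (nbhd y) \<le> card ({p} \<union> nbhd p \<inter> nbhd y \<union> nbhd y \<inter> nbhd y')"
      by (intro card_mono) auto
    also have "\<dots> \<le> card {p} + card (nbhd p \<inter> nbhd y) + card (nbhd y \<inter> nbhd y')"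
      by (meson add_right_mono card_Un_le order_trans)
    finally show False
      using k card_nbhd[OF edge_in_V2[OF e]] card_common_nbhd_edge[OF e]
        card_common_nbhd_edge[OF y'(3)] by simp
  qed
  then obtain x where x: "x \<in> V" "E y x" "x \<noteq> p" "\<not> E p x" "\<not> E y' x" by blast
  have "x \<noteq> y'" using x(4) y'(2) by blast
  have c2_px: "card (nbhd p \<inter> nbhd x) = c2"
    using card_common_nbhd_dist2 gdist_eq_2I[OF e x(2) x(3)[symmetric] x(4)] edge_in_V1[OF e] x(1) by blast
  have "c2 = card (nbhd y' \<inter> nbhd x)"
    using card_common_nbhd_dist2 gdist_eq_2I[OF edge_sym[OF y'(3)] x(2) \<open>x \<noteq> y'\<close>[symmetric] x(5)]
      y'(1) x(1) by simp
  also have "\<dots> \<le> card (nbhd p \<inter> nbhd y' \<union> (nbhd x - nbhd p \<inter> nbhd x))"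
    by (intro card_mono) auto
  also have "\<dots> \<le> card (nbhd p \<inter> nbhd y') + card (nbhd x - nbhd p \<inter> nbhd x)"
    by (rule card_Un_le)
  also have "\<dots> = a1 + (k - c2)"
    using card_common_nbhd_edge[OF y'(2)] card_nbhd[OF x(1)] c2_px
    by (simp add: card_Diff_subset)
  finally show ?thesis
    using c2_px card_nbhd[OF x(1)] card_mono[of "nbhd x" "nbhd p \<inter> nbhd x"] by simp
qed

lemma triangle_free: "a1 = 0 \<Longrightarrow> E p y \<Longrightarrow> E y z \<Longrightarrow> \<not> E p z"
  using card_common_nbhd_edge[of p y] edge_in_V2 by (auto simp: card_eq_0_iff)

lemma dist2_dist2_common_nbhd:
  assumes k: "k < 2 * c2" and V: "x \<in> V" "y \<in> V" "z \<in> V"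
    and d: "gdist V E x y = 2" "gdist V E y z = 2"
  shows "\<exists>w. E x w \<and> E w z"
proof -
  have "2 * c2 = card (nbhd y \<inter> nbhd x) + card (nbhd y \<inter> nbhd z)"
    using card_common_nbhd_dist2[OF V(2,1)] card_common_nbhd_dist2[OF V(2,3)] d
      gdist_sym[OF V(1,2)] by simp
  also have "\<dots> = card (nbhd y \<inter> nbhd x \<union> nbhd y \<inter> nbhd z)
      + card (nbhd y \<inter> nbhd x \<inter> (nbhd y \<inter> nbhd z))"
    by (rule card_Un_Int) simp_all
  also have "\<dots> \<le> card (nbhd y) + card (nbhd x \<inter> nbhd z)"
    by (intro add_mono card_mono) auto
  finally have "nbhd x \<inter> nbhd z \<noteq> {}" using k card_nbhd[OF V(2)] by auto
  then show ?thesis using edge_sym by blast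
qed

lemma eq_or_dist2_if_path2:
  assumes "a1 = 0" "E x w" "E w z"
  shows "x = z \<or> gdist V E x z = 2"
  using gdist_eq_2I[OF assms(2,3)] triangle_free[OF assms] by blast

lemma eq_or_dist2_trans:
  assumes a1: "a1 = 0" and k: "k < 2 * c2" and V: "x \<in> V" "y \<in> V" "z \<in> V"
    and xy: "x = y \<or> gdist V E x y = 2" and yz: "y = z \<or> gdist V E y z = 2"
  shows "x = z \<or> gdist V E x z = 2"
proof (cases "x = y \<or> y = z")
  case False
  then obtain w where "E x w" "E w z"
    using dist2_dist2_common_nbhd[OF k V] xy yz by blast
  then show ?thesis by (rule eq_or_dist2_if_path2[OF a1])
qed (use xy yz in auto)

lemma bipartite_if_triangle_free:
  assumes a1: "a1 = 0" and k: "k < 2 * c2"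
  shows "bipartite V E"
proof -
  obtain u0 where u0: "u0 \<in> V" using connected by (auto simp: connected_graph_def)
  define A where "A = {w \<in> V. u0 = w \<or> gdist V E u0 w = 2}"
  have A_path2: "w' \<in> A" if "w \<in> A" "E w x" "E x w'" for w x w'
  proof -
    have w: "w \<in> V" "u0 = w \<or> gdist V E u0 w = 2" using that(1) unfolding A_def by auto
    have "u0 = w' \<or> gdist V E u0 w' = 2"
      using eq_or_dist2_trans[OF a1 k u0 w(1) edge_in_V2[OF that(3)] w(2)
          eq_or_dist2_if_path2[OF a1 that(2,3)]] .
    then show ?thesis using edge_in_V2[OF that(3)] unfolding A_def by blast
  qed
  have near_A: "w \<in> A \<or> (\<exists>x\<in>A. E x w)" if "w \<in> V" "gdist V E u0 w = i" for w i
    using that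
  proof (induction i arbitrary: w)
    case 0
    then show ?case using gdist_eq_0_imp_eq[OF u0] unfolding A_def by auto
  next
    case (Suc i)
    then obtain w' where "E w' w" "gdist V E u0 w' = i"
      using gdist_Suc_predecessor u0 by blast
    then show ?case using Suc.IH[of w'] A_path2 edge_in_V1 by blast
  qed
  have "x \<in> A \<longleftrightarrow> y \<notin> A" if e: "E x y" for x y
  proof
    assume "x \<in> A"
    show "y \<notin> A"
    proof
      assume "y \<in> A"
      have "x = u0 \<or> gdist V E x u0 = 2"
        using \<open>x \<in> A\<close> gdist_sym[OF u0] unfolding A_def by auto
      moreover have "u0 = y \<or> gdist V E u0 y = 2" using \<open>y \<in> A\<close> unfolding A_def by blast
      ultimately have "x = y \<or> gdist V E x y = 2"
        using eq_or_dist2_trans[OF a1 k edge_in_V1[OF e] u0 edge_in_V2[OF e]] by blast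
      then show False using gdist_edge[OF e] no_loop e by auto
    qed
  next
    assume "y \<notin> A"
    then show "x \<in> A" using near_A[OF edge_in_V1[OF e] refl] A_path2 e by blast
  qed
  moreover have "A \<subseteq> V" unfolding A_def by blast
  ultimately show ?thesis unfolding bipartite_def by blast
qed

lemma card_common_nbhd_le:
  assumes diam: "diameter V E \<ge> 3" and nonbip: "\<not> bipartite V E" and "u \<noteq> v"
  shows "6 * card (nbhd u \<inter> nbhd v) \<le> 5 * k"
proof (cases "nbhd u \<inter> nbhd v = {}")
  case False
  then obtain y where uy: "E u y" and vy: "E v y" by blast
  have bounds: "a1 + c2 \<le> k" "2 * a1 \<le> k + c2" using a1_c2_bounds[OF diam] by auto
  show ?thesis
  proof (cases "E u v")
    case True
    then show ?thesis using card_common_nbhd_edge[OF True] bounds by simp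
  next
    case False
    have "card (nbhd u \<inter> nbhd v) = c2"
      using card_common_nbhd_dist2 gdist_eq_2I[OF uy edge_sym[OF vy] \<open>u \<noteq> v\<close> False]
        edge_in_V1 uy vy by blast
    moreover have "6 * c2 \<le> 5 * k"
    proof (cases "a1 = 0")
      case True
      then show ?thesis using bipartite_if_triangle_free nonbip by fastforce
    next
      case False
      show ?thesis
      proof (rule ccontr)
        assume "\<not> 6 * c2 \<le> 5 * k"
        then have "2 * a1 + 1 < k" using bounds False by linarith
        then show False
          using c2_le_if_triangle[OF uy] \<open>\<not> 6 * c2 \<le> 5 * k\<close> bounds False by linarith
      qed
    qed
    ultimately show ?thesis by simp
  qed
qed simp

lemma degree_le_3_card_moved:
  assumes diam: "diameter V E \<ge> 3" and nonbip: "\<not> bipartite V E"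
    and aut: "automorphism V E \<sigma>" and u: "u \<in> V" "\<sigma> u \<noteq> u"
  shows "k \<le> 3 * card {v \<in> V. \<sigma> v \<noteq> v}"
proof -
  have \<sigma>u: "\<sigma> u \<in> V" using aut u by (auto simp: automorphism_def bij_betw_def)
  have "2 * (k - card (nbhd u \<inter> nbhd (\<sigma> u)))
      = card (nbhd u - nbhd (\<sigma> u)) + card (nbhd (\<sigma> u) - nbhd u)"
    using card_nbhd[OF u(1)] card_nbhd[OF \<sigma>u] by (simp add: card_Diff_subset_Int Int_commute)
  also have "\<dots> \<le> card {v \<in> V. \<sigma> v \<noteq> v}"
    using card_nbhd_sym_diff_le_moved[OF aut u(1)] .
  finally show ?thesis
    using card_common_nbhd_le[OF diam nonbip u(2)[symmetric]] by linarith
qed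

lemma degree_le_3_motion:
  assumes "diameter V E \<ge> 3" and "\<not> bipartite V E" and "motion V E = enat m"
  shows "k \<le> 3 * m"
proof -
  have "enat ((k + 2) div 3) \<le> motion V E"
    by (rule enat_le_motion) (use degree_le_3_card_moved assms(1,2) in fastforce)
  then show ?thesis using assms(3) by simp
qed

end

lemma amply_regular_if_distance_regular:
  assumes drg: "distance_regular V E" and deg: "\<forall>v\<in>V. degree V E v = k"
  shows "\<exists>a1 c2. amply_regular_graph V E k a1 c2"
proof -
  interpret connected_simple_graph V E
    using drg by unfold_locales (auto simp: distance_regular_def)
  obtain a c where
    a: "\<And>v w. v \<in> V \<Longrightarrow> w \<in> V \<Longrightarrow>
      card {u \<in> V. E w u \<and> gdist V E v u = gdist V E v w} = a (gdist V E v w)"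
    and c: "\<And>v w. v \<in> V \<Longrightarrow> w \<in> V \<Longrightarrow>
      card {u \<in> V. E w u \<and> gdist V E v u + 1 = gdist V E v w} = c (gdist V E v w)"
    using drg unfolding distance_regular_def by (elim conjE exE) blast
  have "amply_regular_graph V E k (a 1) (c 2)"
  proof unfold_locales
    show "card (nbhd v) = k" if "v \<in> V" for v
      using deg that by (simp add: degree_def)
    show "card (nbhd u \<inter> nbhd v) = a 1" if e: "E u v" for u v
    proof -
      have "nbhd u \<inter> nbhd v = {x \<in> V. E v x \<and> gdist V E u x = gdist V E u v}"
        using gdist_edge[OF e] gdist_eq_1_iff edge_in_V1[OF e] by auto
      then show ?thesis using a[OF edge_in_V1[OF e] edge_in_V2[OF e]] gdist_edge[OF e] by simp
    qed
    show "card (nbhd u \<inter> nbhd v) = c 2" if "u \<in> V" "v \<in> V" "gdist V E u v = 2" for u v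
    proof -
      have "nbhd u \<inter> nbhd v = {x \<in> V. E v x \<and> gdist V E u x + 1 = gdist V E u v}"
        using that gdist_eq_1_iff by auto
      then show ?thesis using c[OF that(1,2)] that(3) by simp
    qed
  qed
  then show ?thesis by blast
qed

theorem proposition4p6:
  fixes V :: "'a set" and E :: "'a \<Rightarrow> 'a \<Rightarrow> bool" and n k :: nat and \<gamma> :: real
  assumes "distance_regular V E"
    and "diameter V E \<ge> 3"
    and "n = card V"
    and "\<forall>v\<in>V. degree V E v = k"
    and "\<gamma> > 0"
    and "real k > \<gamma> * real n" and "\<gamma> * real n > 2"
    and "\<not> bipartite V E"
  shows "\<forall>m. motion V E = enat m \<longrightarrow> real m \<ge> \<gamma> / 3 * real n"
proof (intro allI impI)
  \<comment> \<open>In fact motion \<ge> k/3.\<close>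
  fix m assume "motion V E = enat m"
  obtain a1 c2 where "amply_regular_graph V E k a1 c2"
    using amply_regular_if_distance_regular assms(1,4) by blast
  then have "k \<le> 3 * m"
    using amply_regular_graph.degree_le_3_motion assms(2,8) \<open>motion V E = enat m\<close> by blast
  then show "\<gamma> / 3 * real n \<le> real m" using assms(6) by linarith
qed

end
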